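(* For every finite point set $P$ in general position, the graph $G_\bigtriangledown(P)$ has at most three vertices of degree one.
   Context: A finite point set $P$ in the plane is in general position if no line through two points of $P$ makes an angle of $0^\circ$, $60^\circ$ or $120^\circ$ with the horizontal. A down-triangle is an equilateral triangle with one side parallel to the $x$-axis and the corner opposite to this side below that side. $G_\bigtriangledown(P)$ is the graph with vertex set $P$ in which $p,q$ are adjacent iff some (closed) down-triangle contains $p$ and $q$ and no other point of $P$. *)

theory Defs
  imports Complex_Main
begin

text \<open>General position: for two distinct points p, q of P the line through them
  is not horizontal (angle 0) and does not make angle 60 or 120 degrees with the
  horizontal, i.e. its slope is neither 0, sqrt 3 nor -sqrt 3.\<close>
definition general_position :: "(real \<times> real) set \<Rightarrow> bool" where
  "general_position P \<longleftrightarrow>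
     (\<forall>p\<in>P. \<forall>q\<in>P. p \<noteq> q \<longrightarrow>
        snd q - snd p \<noteq> 0 \<and>
        snd q - snd p \<noteq> sqrt 3 * (fst q - fst p) \<and>
        snd q - snd p \<noteq> - sqrt 3 * (fst q - fst p))"

text \<open>Closed down-triangle with bottom apex (a, b) and height h > 0: an
  equilateral triangle with horizontal top side at height b + h and the opposite
  corner (a, b) below it.\<close>
definition down_triangle :: "real \<Rightarrow> real \<Rightarrow> real \<Rightarrow> (real \<times> real) set" where
  "down_triangle a b h =
     {(x, y). b \<le> y \<and> y \<le> b + h \<and> \<bar>x - a\<bar> * sqrt 3 \<le> y - b}"

definition is_down_triangle :: "(real \<times> real) set \<Rightarrow> bool" where
  "is_down_triangle T \<longleftrightarrow> (\<exists>a b h. h > 0 \<and> T = down_triangle a b h)"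

definition Gdown_adj :: "(real \<times> real) set \<Rightarrow> real \<times> real \<Rightarrow> real \<times> real \<Rightarrow> bool" where
  "Gdown_adj P p q \<longleftrightarrow> p \<in> P \<and> q \<in> P \<and> p \<noteq> q \<and>
     (\<exists>T. is_down_triangle T \<and> T \<inter> P = {p, q})"

definition Gdown_degree :: "(real \<times> real) set \<Rightarrow> real \<times> real \<Rightarrow> nat" where
  "Gdown_degree P p = card {q \<in> P. Gdown_adj P p q}"

end

theory Submission
  imports Defs
begin

(* A closed down-triangle is the intersection of three half-planes:
   y <= c, y - sqrt 3 * x >= B and y + sqrt 3 * x >= C.  Hence for two points p, r
   there is a smallest down-triangle span_tri p r containing both, and it is
   monotone: if u, v lie in span_tri p r then span_tri u v is contained in it.
   By general position, a point r' of P strictly inside span_tri p r spans with p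
   a triangle not containing r; descending on the number of points of P inside,
   every span_tri p r (r in P, r ~= p) contains a neighbour of p in G_down(P).
   If p has degree one with neighbour q, then q lies in span_tri p r for every
   other r, and comparing the three levels of q and p shows that p is the unique
   extreme point of P for one of the three level functions: lowest height, largest
   value of y - sqrt 3 * x, or largest value of y + sqrt 3 * x.  Each level
   function has at most one extreme point, so there are at most three vertices of
   degree one. *)

text \<open>The levels of a point along the two non-horizontal sides of a down-triangle.\<close>
definition diag_pos :: "real \<times> real \<Rightarrow> real" where
  "diag_pos z = snd z - sqrt 3 * fst z"

definition diag_neg :: "real \<times> real \<Rightarrow> real" where
  "diag_neg z = snd z + sqrt 3 * fst z"

text \<open>The two diagonal levels average to the height; this is why a point below
  another must be below it along one of the diagonals.\<close>
lemma diag_sum: "diag_pos z + diag_neg z = 2 * snd z"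
  unfolding diag_pos_def diag_neg_def by simp

lemma lower_point_lower_diag:
  assumes "snd q < snd p"
  shows "diag_pos q < diag_pos p \<or> diag_neg q < diag_neg p"
  using assms diag_sum[of q] diag_sum[of p] by linarith

lemma general_position_levels:
  assumes "general_position P" "p \<in> P" "q \<in> P" "p \<noteq> q"
  shows "snd q \<noteq> snd p" "diag_pos q \<noteq> diag_pos p" "diag_neg q \<noteq> diag_neg p"
  using assms unfolding general_position_def diag_pos_def diag_neg_def
  by (auto simp: algebra_simps)

text \<open>The smallest closed down-triangle containing p and r (possibly degenerate).\<close>
definition span_tri :: "real \<times> real \<Rightarrow> real \<times> real \<Rightarrow> (real \<times> real) set" where
  "span_tri p r = {z. snd z \<le> max (snd p) (snd r) \<and>
     min (diag_pos p) (diag_pos r) \<le> diag_pos z \<and> min (diag_neg p) (diag_neg r) \<le> diag_neg z}"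

lemma span_tri_mem: "p \<in> span_tri p r" "r \<in> span_tri p r"
  unfolding span_tri_def by auto

lemma span_tri_mono: "u \<in> span_tri p r \<Longrightarrow> v \<in> span_tri p r \<Longrightarrow> span_tri u v \<subseteq> span_tri p r"
  unfolding span_tri_def by (auto simp: min_def max_def split: if_splits)

text \<open>If p and r are at different heights, span_tri p r is a genuine down-triangle:
  its apex is the intersection of the two diagonal sides, its height positive.\<close>
lemma span_tri_is_down_triangle:
  assumes "snd p \<noteq> snd r"
  shows "is_down_triangle (span_tri p r)"
proof -
  define s where "s = sqrt (3::real)"
  have s: "s > 0" unfolding s_def by simp
  define B where "B = min (diag_pos p) (diag_pos r)"
  define C where "C = min (diag_neg p) (diag_neg r)"
  define Y where "Y = max (snd p) (snd r)"
  define a where "a = (C - B) / (2 * s)"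
  define b where "b = (B + C) / 2"
  define h where "h = Y - b"
  have "B + C \<le> 2 * snd p" "B + C \<le> 2 * snd r"
    unfolding B_def C_def using diag_sum[of p] diag_sum[of r] by auto
  hence h_pos: "h > 0" unfolding h_def b_def Y_def using assms by auto
  have "span_tri p r = down_triangle a b h"
  proof (rule set_eqI)
    fix z :: "real \<times> real"
    obtain x y where z: "z = (x, y)" by (cases z)
    have "a * s = (C - B) / 2" unfolding a_def using s by simp
    hence "(x - a) * s = s * x - (C - B) / 2" by (simp add: algebra_simps)
    hence apex: "\<bar>x - a\<bar> * s = \<bar>s * x - (C - B) / 2\<bar>"
      using s by (metis abs_mult abs_of_pos)
    have "z \<in> span_tri p r \<longleftrightarrow> y \<le> Y \<and> B \<le> y - s * x \<and> C \<le> y + s * x"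
      unfolding span_tri_def z B_def C_def Y_def diag_pos_def diag_neg_def s_def by simp
    also have "\<dots> \<longleftrightarrow> b \<le> y \<and> y \<le> b + h \<and> \<bar>x - a\<bar> * s \<le> y - b"
      unfolding apex b_def h_def abs_le_iff by argo
    also have "\<dots> \<longleftrightarrow> z \<in> down_triangle a b h"
      unfolding down_triangle_def z s_def by simp
    finally show "z \<in> span_tri p r \<longleftrightarrow> z \<in> down_triangle a b h" .
  qed
  then show ?thesis unfolding is_down_triangle_def using h_pos by blast
qed

lemma span_tri_shrinks:
  assumes "general_position P" "p \<in> P" "r \<in> P" "r' \<in> P" "r \<noteq> p" "r' \<noteq> r"
    and r'_in: "r' \<in> span_tri p r"
  shows "r \<notin> span_tri p r'"
proof
  assume r_in: "r \<in> span_tri p r'"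
  have "snd r \<noteq> snd p" using general_position_levels assms(1-3,5) by metis
  moreover have "snd r' \<noteq> snd r" "diag_pos r' \<noteq> diag_pos r" "diag_neg r' \<noteq> diag_neg r"
    using general_position_levels assms(1,3,4,6) by metis+
  moreover have "snd r < snd p \<Longrightarrow> diag_pos r < diag_pos p \<or> diag_neg r < diag_neg p"
    by (rule lower_point_lower_diag)
  ultimately show False
    using r_in r'_in unfolding span_tri_def by (cases "snd r > snd p") auto
qed

text \<open>Descent on the number of points of P in span_tri p r: if p and r are the only
  ones, they are adjacent; otherwise pass to a smaller spanned triangle.\<close>
lemma neighbour_in_span_tri:
  assumes "finite P" "general_position P" "p \<in> P"
  shows "r \<in> P \<Longrightarrow> r \<noteq> p \<Longrightarrow> \<exists>q. Gdown_adj P p q \<and> q \<in> span_tri p r"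
proof (induction "card (span_tri p r \<inter> P)" arbitrary: r rule: less_induct)
  case less
  show ?case
  proof (cases "span_tri p r \<inter> P = {p, r}")
    case True
    have "snd p \<noteq> snd r" using general_position_levels assms(2,3) less.prems by metis
    hence "is_down_triangle (span_tri p r)" by (rule span_tri_is_down_triangle)
    hence "Gdown_adj P p r"
      unfolding Gdown_adj_def using assms(3) less.prems True by blast
    then show ?thesis using span_tri_mem by blast
  next
    case False
    have "{p, r} \<subseteq> span_tri p r \<inter> P" using span_tri_mem less.prems assms(3) by auto
    then obtain r' where r': "r' \<in> span_tri p r" "r' \<in> P" "r' \<noteq> p" "r' \<noteq> r"
      using False by blast
    have sub: "span_tri p r' \<subseteq> span_tri p r" using span_tri_mono[OF span_tri_mem(1) r'(1)] .
    have "r \<notin> span_tri p r'"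
      using span_tri_shrinks[OF assms(2,3) less.prems(1) r'(2) less.prems(2) r'(4,1)] .
    hence "span_tri p r' \<inter> P \<subset> span_tri p r \<inter> P"
      using sub less.prems(1) span_tri_mem(2) by blast
    hence "card (span_tri p r' \<inter> P) < card (span_tri p r \<inter> P)"
      using assms(1) by (meson finite_Int psubset_card_mono)
    then obtain q where "Gdown_adj P p q" "q \<in> span_tri p r'" using less.hyps r'(2,3) by blast
    then show ?thesis using sub by blast
  qed
qed

definition extreme_in :: "(real \<times> real) set \<Rightarrow> (real \<times> real \<Rightarrow> real) \<Rightarrow> real \<times> real \<Rightarrow> bool" where
  "extreme_in P f p \<longleftrightarrow> (\<forall>r\<in>P. r \<noteq> p \<longrightarrow> f r < f p)"

lemma card_extreme_le_1:
  assumes "finite P"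
  shows "card {p \<in> P. extreme_in P f p} \<le> 1"
proof -
  have "p = p'" if "extreme_in P f p" "extreme_in P f p'" "p \<in> P" "p' \<in> P" for p p'
  proof (rule ccontr)
    assume "p \<noteq> p'"
    hence "f p' < f p" "f p < f p'" using that unfolding extreme_in_def by auto
    then show False by simp
  qed
  then show ?thesis
    using assms unfolding One_nat_def by (subst card_le_Suc0_iff_eq) auto
qed

text \<open>A point q of P lying in every triangle spanned by p forces p to be extreme
  for the level in which q exceeds p (height) or falls below p (diagonals).\<close>
lemma common_point_forces_extreme:
  assumes "general_position P" "p \<in> P" "q \<in> P" "q \<noteq> p"
    and q_in: "\<And>r. r \<in> P \<Longrightarrow> r \<noteq> p \<Longrightarrow> q \<in> span_tri p r"
  shows "extreme_in P (\<lambda>z. - snd z) p \<or> extreme_in P diag_pos p \<or> extreme_in P diag_neg p"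
proof (cases "snd q > snd p")
  case True
  have "snd p < snd r" if "r \<in> P" "r \<noteq> p" for r
  proof -
    have "snd r \<noteq> snd p" using general_position_levels(1)[OF assms(1,2) that(1)] that(2) by metis
    then show ?thesis using q_in[OF that] True unfolding span_tri_def by auto
  qed
  then show ?thesis unfolding extreme_in_def by simp
next
  case False
  moreover have "snd q \<noteq> snd p" using general_position_levels(1)[OF assms(1,2,3)] assms(4) by metis
  ultimately have "snd q < snd p" by simp
  hence "diag_pos q < diag_pos p \<or> diag_neg q < diag_neg p" by (rule lower_point_lower_diag)
  then show ?thesis
  proof
    assume below: "diag_pos q < diag_pos p"
    have "diag_pos r < diag_pos p" if "r \<in> P" "r \<noteq> p" for r
      using q_in[OF that] below unfolding span_tri_def by auto
    then show ?thesis unfolding extreme_in_def by simp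
  next
    assume below: "diag_neg q < diag_neg p"
    have "diag_neg r < diag_neg p" if "r \<in> P" "r \<noteq> p" for r
      using q_in[OF that] below unfolding span_tri_def by auto
    then show ?thesis unfolding extreme_in_def by simp
  qed
qed

text \<open>The unique neighbour of a vertex of degree one lies in every triangle it spans.\<close>
lemma degree_one_extreme:
  assumes "finite P" "general_position P" "p \<in> P" "Gdown_degree P p = 1"
  shows "extreme_in P (\<lambda>z. - snd z) p \<or> extreme_in P diag_pos p \<or> extreme_in P diag_neg p"
proof -
  obtain q where q: "{q \<in> P. Gdown_adj P p q} = {q}"
    using assms(4) unfolding Gdown_degree_def by (meson card_1_singletonE)
  hence q_P: "q \<in> P" "q \<noteq> p" unfolding Gdown_adj_def by auto
  have "q \<in> span_tri p r" if r: "r \<in> P" "r \<noteq> p" for r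
  proof -
    obtain q' where "Gdown_adj P p q'" "q' \<in> span_tri p r"
      using neighbour_in_span_tri[OF assms(1-3) r] by blast
    moreover from this have "q' = q" using q unfolding Gdown_adj_def by blast
    ultimately show ?thesis by simp
  qed
  then show ?thesis using common_point_forces_extreme assms(2,3) q_P by blast
qed

theorem lemma3:
  fixes P :: "(real \<times> real) set"
  assumes "finite P" and "general_position P"
  shows "card {p \<in> P. Gdown_degree P p = 1} \<le> 3"
proof -
  let ?E = "\<lambda>f. {p \<in> P. extreme_in P f p}"
  have "{p \<in> P. Gdown_degree P p = 1} \<subseteq> ?E (\<lambda>z. - snd z) \<union> ?E diag_pos \<union> ?E diag_neg"
    using degree_one_extreme[OF assms] by blast
  hence "card {p \<in> P. Gdown_degree P p = 1}
           \<le> card (?E (\<lambda>z. - snd z) \<union> ?E diag_pos \<union> ?E diag_neg)"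
    using assms(1) by (intro card_mono) auto
  also have "\<dots> \<le> card (?E (\<lambda>z. - snd z)) + card (?E diag_pos) + card (?E diag_neg)"
    using card_Un_le[of "?E (\<lambda>z. - snd z) \<union> ?E diag_pos" "?E diag_neg"]
      card_Un_le[of "?E (\<lambda>z. - snd z)" "?E diag_pos"] by linarith
  also have "\<dots> \<le> 3"
    using card_extreme_le_1[OF assms(1), of "\<lambda>z. - snd z"]
      card_extreme_le_1[OF assms(1), of diag_pos] card_extreme_le_1[OF assms(1), of diag_neg]
    by linarith
  finally show ?thesis .
qed

end
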